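(* Let $m$ be an even positive integer, $q=2^m$, and let $\{u_1,u_2,u_3,u_4\}$ be a $4$-element subset of $U_{q+1}$. Let $M_4$ be the $4\times4$ matrix whose $j$-th column is $(u_j^{-5},u_j^{-3},u_j^{3},u_j^{5})^T$. Then $\mathrm{rank}(M_4)=3$ if and only if $\sigma_{4,2}^2+\sigma_{4,1}\sigma_{4,3}=0$, where $\sigma_{4,\ell}=\sigma_{4,\ell}(u_1,u_2,u_3,u_4)$.
   Context: $U_{q+1}$ denotes the set of $(q+1)$-th roots of unity in $\mathrm{GF}(q^2)$; ranks are over $\mathrm{GF}(q^2)$. $\sigma_{k,\ell}(u_1,\dots,u_k)=\sum_{I\subseteq\{1,\dots,k\},|I|=\ell}\prod_{j\in I}u_j$ is the elementary symmetric polynomial of degree $\ell$ in $k$ variables. *)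

theory Defs
  imports "Jordan_Normal_Form.DL_Rank"
begin

definition roots_unity :: "nat \<Rightarrow> 'a::field set" where
  "roots_unity n = {x. x ^ n = 1}"

definition esym :: "nat \<Rightarrow> nat \<Rightarrow> (nat \<Rightarrow> 'a::comm_ring_1) \<Rightarrow> 'a" where
  "esym k l u = (\<Sum>I\<in>{I. I \<subseteq> {0..<k} \<and> card I = l}. \<Prod>j\<in>I. u j)"

definition M4 :: "(nat \<Rightarrow> 'a::field) \<Rightarrow> 'a mat" where
  "M4 u = mat 4 4 (\<lambda>(i, j).
     (if i = 0 then inverse (u j) ^ 5 else if i = 1 then inverse (u j) ^ 3
      else if i = 2 then u j ^ 3 else u j ^ 5))"

end

(* Column j of M4 u is u_j^-5 (1, x_j, x_j^4, x_j^5) with x_j = u_j^2.  Hence det (M4 u) is, up to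
   the factors u_j^-5 and the Vandermonde product of the x_j (nonzero, since squaring is injective
   in characteristic 2), the Schur polynomial e2(x)^2 - e1(x) e3(x); by the Frobenius map
   ek(x) = ek(u)^2, so this factor is (e2(u)^2 + e1(u) e3(u))^2, and the rank is 4 exactly when
   the condition fails.  The rank is never below 3: the minors on the first three columns and the
   rows of exponents (0,1,4) resp. (0,1,5) are, up to nonzero factors, h2 resp. h3 of x_0, x_1, x_2,
   and h3 + x_0 h2 = (x_1 + x_2)^3 in characteristic 2, so both cannot vanish. *)

theory Submission
  imports Defs "HOL-Number_Theory.Residues" "Jordan_Normal_Form.DL_Rank_Submatrix"
begin

lemma esym_degree_0: "esym k 0 u = 1"
proof -
  have "{I. I \<subseteq> {0..<k} \<and> card I = 0} = {{}}"
    using finite_subset by fastforce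
  then show ?thesis unfolding esym_def by simp
qed

lemma esym_0_Suc: "esym 0 (Suc l) u = 0"
proof -
  have "{I. I \<subseteq> {0..<0::nat} \<and> card I = Suc l} = {}"
    by auto
  then show ?thesis unfolding esym_def by (simp only: sum.empty)
qed

lemma esym_Suc_Suc: "esym (Suc k) (Suc l) u = esym k (Suc l) u + u k * esym k l u"
proof -
  let ?A = "{I. I \<subseteq> {0..<k} \<and> card I = Suc l}"
  let ?C = "{I. I \<subseteq> {0..<k} \<and> card I = l}"
  let ?B = "insert k ` ?C"
  have split: "{I. I \<subseteq> {0..<Suc k} \<and> card I = Suc l} = ?A \<union> ?B"
  proof (intro equalityI subsetI)
    fix I assume "I \<in> {I. I \<subseteq> {0..<Suc k} \<and> card I = Suc l}"
    then have I: "I \<subseteq> {0..<Suc k}" "card I = Suc l" "finite I"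
      using finite_subset by auto
    show "I \<in> ?A \<union> ?B"
    proof (cases "k \<in> I")
      case True
      then have "I = insert k (I - {k})" "I - {k} \<in> ?C"
        using I by auto
      then show ?thesis by blast
    next
      case False
      then show ?thesis using I by (auto simp: less_Suc_eq)
    qed
  next
    fix I assume "I \<in> ?A \<union> ?B"
    then show "I \<in> {I. I \<subseteq> {0..<Suc k} \<and> card I = Suc l}"
    proof
      assume "I \<in> ?B"
      then obtain J where "J \<in> ?C" "I = insert k J" by blast
      moreover have "finite J" "k \<notin> J"
        using \<open>J \<in> ?C\<close> finite_subset by auto
      ultimately show ?thesis by auto
    qed auto
  qed
  have disjoint: "?A \<inter> ?B = {}" by auto
  have finite: "finite ?A" "finite ?B"
    by (auto intro: finite_subset[of _ "Pow {0..<k}"])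
  have inj: "inj_on (insert k) ?C"
    by (rule inj_onI) (metis atLeastLessThan_iff insert_ident less_irrefl mem_Collect_eq subsetD)
  have "esym (Suc k) (Suc l) u = (\<Sum>I\<in>?A. \<Prod>j\<in>I. u j) + (\<Sum>I\<in>?B. \<Prod>j\<in>I. u j)"
    unfolding esym_def split by (rule sum.union_disjoint[OF finite disjoint])
  also have "(\<Sum>I\<in>?B. \<Prod>j\<in>I. u j) = (\<Sum>I\<in>?C. u k * (\<Prod>j\<in>I. u j))"
    unfolding sum.reindex[OF inj, unfolded comp_def]
  proof (rule sum.cong[OF refl])
    fix I assume "I \<in> ?C"
    then have "finite I" "k \<notin> I"
      using finite_subset by auto
    then show "(\<Prod>j\<in>insert k I. u j) = u k * (\<Prod>j\<in>I. u j)" by simp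
  qed
  finally show ?thesis unfolding esym_def by (simp add: sum_distrib_left)
qed

lemma esym_4_1: "esym 4 1 u = u 0 + u 1 + u 2 + u 3"
  by (simp add: numeral_eq_Suc esym_Suc_Suc esym_degree_0 esym_0_Suc algebra_simps)

lemma esym_4_2: "esym 4 2 u = u 0 * u 1 + u 0 * u 2 + u 0 * u 3 + u 1 * u 2 + u 1 * u 3 + u 2 * u 3"
  by (simp add: numeral_eq_Suc esym_Suc_Suc esym_degree_0 esym_0_Suc algebra_simps)

lemma esym_4_3: "esym 4 3 u = u 0 * u 1 * u 2 + u 0 * u 1 * u 3 + u 0 * u 2 * u 3 + u 1 * u 2 * u 3"
  by (simp add: numeral_eq_Suc esym_Suc_Suc esym_degree_0 esym_0_Suc algebra_simps)

lemma two_eq_zero_if_card_power_two: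
  assumes "card (UNIV :: 'a::{field, finite} set) = 2 ^ k"
  shows "(2::'a) = 0"
proof -
  have "prime CHAR('a)"
    by (rule prime_CHAR_semidom) (simp add: finite_imp_CHAR_pos)
  moreover have "CHAR('a) dvd 2 ^ k"
    using CHAR_dvd_CARD[where 'a='a] assms by simp
  ultimately have "CHAR('a) = 2"
    using prime_dvd_power primes_dvd_imp_eq two_is_prime_nat by blast
  then show ?thesis
    using of_nat_CHAR[where 'a='a] by simp
qed

lemma diff_eq_add_char2:
  fixes a b :: "'a::comm_ring_1"
  assumes "(2::'a) = 0"
  shows "a - b = a + b"
proof -
  have "b + b = 0"
    using assms by (metis mult_2 mult_zero_left)
  then have "a - b = a - b + (b + b)" by simp
  then show ?thesis by (simp add: algebra_simps)
qed

lemma power2_add_char2: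
  fixes a b :: "'a::comm_ring_1"
  assumes "(2::'a) = 0"
  shows "(a + b)^2 = a^2 + b^2"
  using assms by (simp add: power2_sum)

lemma sum_power2_char2:
  fixes f :: "'b \<Rightarrow> 'a::comm_ring_1"
  assumes "(2::'a) = 0"
  shows "(\<Sum>x\<in>A. f x)^2 = (\<Sum>x\<in>A. f x ^ 2)"
proof (induction A rule: infinite_finite_induct)
  case (insert x F)
  then show ?case by (simp add: power2_add_char2[OF assms])
qed simp_all

lemma esym_power2_char2:
  assumes "(2::'a::comm_ring_1) = 0"
  shows "esym k l (\<lambda>j. u j ^ 2) = (esym k l u :: 'a) ^ 2"
  unfolding esym_def by (simp add: sum_power2_char2[OF assms] prod_power_distrib)

lemma power2_eq_iff_char2:
  fixes a b :: "'a::idom"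
  assumes "(2::'a) = 0"
  shows "a^2 = b^2 \<longleftrightarrow> a = b"
proof -
  have "(a - b)^2 = a^2 - b^2"
    using assms by (simp add: diff_eq_add_char2[OF assms] power2_add_char2)
  then show ?thesis by auto
qed

lemma inj_on_power2_char2:
  fixes u :: "'b \<Rightarrow> 'a::idom"
  assumes "(2::'a) = 0" "inj_on u A"
  shows "inj_on (\<lambda>j. u j ^ 2) A"
  using assms by (simp add: inj_on_def power2_eq_iff_char2)

lemma det_mat_Suc:
  fixes f :: "nat \<times> nat \<Rightarrow> 'a::comm_ring_1"
  shows "det (mat (Suc k) (Suc k) f) = (\<Sum>j<Suc k. f (0,j) * (-1)^j *
     det (mat k k (\<lambda>(i',j'). f (Suc i', if j' < j then j' else Suc j'))))"
proof -
  have "det (mat (Suc k) (Suc k) f) = (\<Sum>j<Suc k. (mat (Suc k) (Suc k) f) $$ (0,j) * cofactor (mat (Suc k) (Suc k) f) 0 j)"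
    by (rule laplace_expansion_row) auto
  also have "\<dots> = (\<Sum>j<Suc k. f (0,j) * (-1)^j *
     det (mat k k (\<lambda>(i',j'). f (Suc i', if j' < j then j' else Suc j'))))"
  proof (rule sum.cong[OF refl])
    fix j assume j: "j \<in> {..<Suc k}"
    have "mat_delete (mat (Suc k) (Suc k) f) 0 j = mat k k (\<lambda>(i',j'). f (Suc i', if j' < j then j' else Suc j'))"
      unfolding mat_delete_def by (rule eq_matI) auto
    then show "(mat (Suc k) (Suc k) f) $$ (0,j) * cofactor (mat (Suc k) (Suc k) f) 0 j = f (0,j) * (-1)^j *
     det (mat k k (\<lambda>(i',j'). f (Suc i', if j' < j then j' else Suc j')))"
      using j by (simp add: cofactor_def)
  qed
  finally show ?thesis .
qed

lemma det_mat_4: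
  fixes f :: "nat \<times> nat \<Rightarrow> 'a::idom"
  shows "det (mat 4 4 f) =
    f(0,0)*f(1,1)*f(2,2)*f(3,3) - f(0,0)*f(1,1)*f(2,3)*f(3,2) - f(0,0)*f(1,2)*f(2,1)*f(3,3)
    + f(0,0)*f(1,2)*f(2,3)*f(3,1) + f(0,0)*f(1,3)*f(2,1)*f(3,2) - f(0,0)*f(1,3)*f(2,2)*f(3,1)
    - f(0,1)*f(1,0)*f(2,2)*f(3,3) + f(0,1)*f(1,0)*f(2,3)*f(3,2) + f(0,1)*f(1,2)*f(2,0)*f(3,3)
    - f(0,1)*f(1,2)*f(2,3)*f(3,0) - f(0,1)*f(1,3)*f(2,0)*f(3,2) + f(0,1)*f(1,3)*f(2,2)*f(3,0)
    + f(0,2)*f(1,0)*f(2,1)*f(3,3) - f(0,2)*f(1,0)*f(2,3)*f(3,1) - f(0,2)*f(1,1)*f(2,0)*f(3,3)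
    + f(0,2)*f(1,1)*f(2,3)*f(3,0) + f(0,2)*f(1,3)*f(2,0)*f(3,1) - f(0,2)*f(1,3)*f(2,1)*f(3,0)
    - f(0,3)*f(1,0)*f(2,1)*f(3,2) + f(0,3)*f(1,0)*f(2,2)*f(3,1) + f(0,3)*f(1,1)*f(2,0)*f(3,2)
    - f(0,3)*f(1,1)*f(2,2)*f(3,0) - f(0,3)*f(1,2)*f(2,0)*f(3,1) + f(0,3)*f(1,2)*f(2,1)*f(3,0)"
  by (simp add: numeral_eq_Suc det_mat_Suc det_dim_zero algebra_simps)

lemma det_mat_scale_cols:
  assumes "A \<in> carrier_mat n n"
  shows "det (mat n n (\<lambda>(i, j). c j * A $$ (i, j))) = (\<Prod>j<n. c j) * det A"
proof -
  have "(\<Prod>i = 0..<n. c (p i) * A $$ (i, p i)) = (\<Prod>j<n. c j) * (\<Prod>i = 0..<n. A $$ (i, p i))"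
    if "p permutes {0..<n}" for p
    using prod.permute[OF that, of c] by (simp add: prod.distrib atLeast0LessThan comp_def)
  then show ?thesis
    using assms unfolding det_def by (simp add: sum_distrib_left ac_simps)
qed

lemma pick_three:
  assumes "a < b" "b < c" "i < 3"
  shows "pick {a, b, c} i = [a, b, c] ! i"
proof -
  have 0: "pick {a, b, c} 0 = a"
    using assms by (auto intro!: Least_equality)
  have 1: "pick {a, b, c} 1 = b"
    using assms 0 by (auto intro!: Least_equality)
  have 2: "pick {a, b, c} 2 = c"
    using assms 1 by (auto simp: numeral_2_eq_2 intro!: Least_equality)
  show ?thesis
    using assms(3) 0 1 2 by (auto simp: less_Suc_eq numeral_3_eq_3 numeral_2_eq_2)
qed

lemma submatrix_three_rows_first_cols:
  assumes "A \<in> carrier_mat n m" "a < b" "b < c" "c < n" "3 \<le> m"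
  shows "submatrix A {a, b, c} {0, 1, 2} = mat 3 3 (\<lambda>(i, j). A $$ ([a, b, c] ! i, j))"
proof -
  have rows: "card {i. i < dim_row A \<and> i \<in> {a, b, c}} = 3"
  proof -
    have "{i. i < dim_row A \<and> i \<in> {a, b, c}} = {a, b, c}"
      using assms by auto
    then show ?thesis using assms(2,3) by simp
  qed
  have cols: "card {j. j < dim_col A \<and> j \<in> {0, 1, 2}} = 3"
  proof -
    have "{j. j < dim_col A \<and> j \<in> {0, 1, 2}} = {0, 1, 2}"
      using assms by auto
    then show ?thesis by simp
  qed
  show ?thesis
  proof (rule eq_matI)
    fix i j assume "i < dim_row (mat 3 3 (\<lambda>(i, j). A $$ ([a, b, c] ! i, j)))"
      "j < dim_col (mat 3 3 (\<lambda>(i, j). A $$ ([a, b, c] ! i, j)))"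
    then have "i < 3" "j < 3" by auto
    then show "submatrix A {a, b, c} {0, 1, 2} $$ (i, j) = mat 3 3 (\<lambda>(i, j). A $$ ([a, b, c] ! i, j)) $$ (i, j)"
      using submatrix_index[of i A "{a, b, c}" j "{0, 1, 2}"] rows cols
        pick_three[OF assms(2,3)] pick_three[of 0 1 2 j]
      by (auto simp: less_Suc_eq numeral_3_eq_3 numeral_2_eq_2)
  qed (simp_all only: dim_submatrix rows cols dim_row_mat dim_col_mat)
qed

definition gen_vandermonde :: "nat list \<Rightarrow> (nat \<Rightarrow> 'a::comm_ring_1) \<Rightarrow> 'a mat" where
  "gen_vandermonde es x = mat (length es) (length es) (\<lambda>(i, j). x j ^ (es ! i))"

lemma det_gen_vandermonde_014:
  fixes x :: "nat \<Rightarrow> 'a::idom"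
  shows "det (gen_vandermonde [0, 1, 4] x) = (\<Prod>j<3. \<Prod>i<j. x j - x i) *
     (x 0^2 + x 1^2 + x 2^2 + x 0 * x 1 + x 0 * x 2 + x 1 * x 2)"
  unfolding gen_vandermonde_def
  by (simp add: numeral_eq_Suc det_mat_Suc det_dim_zero lessThan_Suc) Groebner_Basis.algebra

lemma det_gen_vandermonde_015:
  fixes x :: "nat \<Rightarrow> 'a::idom"
  shows "det (gen_vandermonde [0, 1, 5] x) = (\<Prod>j<3. \<Prod>i<j. x j - x i) *
     (x 0^3 + x 1^3 + x 2^3 + x 0^2 * x 1 + x 0^2 * x 2 + x 1^2 * x 0 + x 1^2 * x 2
      + x 2^2 * x 0 + x 2^2 * x 1 + x 0 * x 1 * x 2)"
  unfolding gen_vandermonde_def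
  by (simp add: numeral_eq_Suc det_mat_Suc det_dim_zero lessThan_Suc) Groebner_Basis.algebra

lemma det_gen_vandermonde_0145:
  fixes x :: "nat \<Rightarrow> 'a::idom"
  shows "det (gen_vandermonde [0, 1, 4, 5] x) = (\<Prod>j<4. \<Prod>i<j. x j - x i) *
     (esym 4 2 x ^ 2 - esym 4 1 x * esym 4 3 x)"
proof -
  have mat: "gen_vandermonde [0, 1, 4, 5] x = mat 4 4 (\<lambda>(i, j). x j ^ ([0, 1, 4, 5] ! i))"
    by (simp add: gen_vandermonde_def numeral_eq_Suc)
  show ?thesis
    unfolding mat det_mat_4 esym_4_1 esym_4_2 esym_4_3
    by (simp add: lessThan_Suc numeral_eq_Suc) Groebner_Basis.algebra
qed

lemma vandermonde_prod_ne_zero: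
  fixes x :: "nat \<Rightarrow> 'a::idom"
  assumes "inj_on x {0..<n}"
  shows "(\<Prod>j<n. \<Prod>i<j. x j - x i) \<noteq> 0"
  by (auto dest!: inj_onD[OF assms])

lemma det_gen_vandermonde_014_or_015_char2:
  fixes x :: "nat \<Rightarrow> 'a::idom"
  assumes char2: "(2::'a) = 0" and inj: "inj_on x {0..<3}"
  shows "det (gen_vandermonde [0, 1, 4] x) \<noteq> 0 \<or> det (gen_vandermonde [0, 1, 5] x) \<noteq> 0"
proof (rule ccontr)
  let ?h2 = "x 0^2 + x 1^2 + x 2^2 + x 0 * x 1 + x 0 * x 2 + x 1 * x 2"
  let ?h3 = "x 0^3 + x 1^3 + x 2^3 + x 0^2 * x 1 + x 0^2 * x 2 + x 1^2 * x 0 + x 1^2 * x 2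
      + x 2^2 * x 0 + x 2^2 * x 1 + x 0 * x 1 * x 2"
  assume "\<not> ?thesis"
  then have "(\<Prod>j<3. \<Prod>i<j. x j - x i) * ?h2 = 0" "(\<Prod>j<3. \<Prod>i<j. x j - x i) * ?h3 = 0"
    unfolding det_gen_vandermonde_014 det_gen_vandermonde_015 by auto
  moreover have "(\<Prod>j<3. \<Prod>i<j. x j - x i) \<noteq> 0"
    using inj by (rule vandermonde_prod_ne_zero)
  ultimately have "?h2 = 0" "?h3 = 0"
    by simp_all
  moreover have "?h3 + x 0 * ?h2 = (x 1 + x 2)^3 + 2 * (x 0^3 + x 0^2 * x 1 + x 0^2 * x 2
      + x 0 * x 1^2 + x 0 * x 2^2 + x 0 * x 1 * x 2 - x 1^2 * x 2 - x 1 * x 2^2)"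
    by Groebner_Basis.algebra
  ultimately have "(x 1 + x 2)^3 = 0"
    using char2 by simp
  then have "x 1 + x 2 = 0"
    by simp
  then have "x 1 - x 2 = 0"
    by (simp only: diff_eq_add_char2[OF char2])
  then show False
    using inj_onD[OF inj, of 1 2] by simp
qed

lemma M4_index:
  assumes "i < 4" "j < 4" "u j \<noteq> 0"
  shows "M4 u $$ (i, j) = inverse (u j) ^ 5 * (u j ^ 2) ^ ([0, 1, 4, 5] ! i)"
proof -
  consider "i = 0" | "i = 1" | "i = 2" | "i = 3"
    using assms(1) by linarith
  then show ?thesis
    using assms(2,3) by cases (simp_all add: M4_def field_simps eval_nat_numeral)
qed

lemma M4_eq_scale_cols_gen_vandermonde:
  assumes "\<forall>j<4. u j \<noteq> 0"
  shows "M4 u = mat 4 4 (\<lambda>(i, j). inverse (u j) ^ 5 * gen_vandermonde [0, 1, 4, 5] (\<lambda>j. u j ^ 2) $$ (i, j))"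
  by (rule eq_matI) (simp_all add: M4_index assms gen_vandermonde_def, simp_all add: M4_def)

lemma M4_minor_eq_scale_cols_gen_vandermonde:
  assumes "\<forall>j<4. u j \<noteq> 0" and re: "(r, e) \<in> {(2, 4), (3, 5)}"
  shows "submatrix (M4 u) {0, 1, r} {0, 1, 2} =
    mat 3 3 (\<lambda>(i, j). inverse (u j) ^ 5 * gen_vandermonde [0, 1, e] (\<lambda>j. u j ^ 2) $$ (i, j))"
proof -
  have "submatrix (M4 u) {0, 1, r} {0, 1, 2} = mat 3 3 (\<lambda>(i, j). M4 u $$ ([0, 1, r] ! i, j))"
    using re by (intro submatrix_three_rows_first_cols[of _ 4 4]) (auto simp: M4_def)
  also have "\<dots> = mat 3 3 (\<lambda>(i, j). inverse (u j) ^ 5 * gen_vandermonde [0, 1, e] (\<lambda>j. u j ^ 2) $$ (i, j))"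
  proof (rule eq_matI)
    fix i j assume "i < dim_row (mat 3 3 (\<lambda>(i, j). inverse (u j) ^ 5 * gen_vandermonde [0, 1, e] (\<lambda>j. u j ^ 2) $$ (i, j)))"
      "j < dim_col (mat 3 3 (\<lambda>(i, j). inverse (u j) ^ 5 * gen_vandermonde [0, 1, e] (\<lambda>j. u j ^ 2) $$ (i, j)))"
    then have ij: "i < 3" "j < 3" by auto
    then have "[0, 1, r] ! i < 4" "[0, 1, 4, 5] ! ([0, 1, r] ! i) = [0, 1, e] ! i"
      using re by (auto simp: less_Suc_eq numeral_3_eq_3 numeral_2_eq_2)
    then show "mat 3 3 (\<lambda>(i, j). M4 u $$ ([0, 1, r] ! i, j)) $$ (i, j) =
      mat 3 3 (\<lambda>(i, j). inverse (u j) ^ 5 * gen_vandermonde [0, 1, e] (\<lambda>j. u j ^ 2) $$ (i, j)) $$ (i, j)"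
      using ij assms(1) by (simp add: M4_index gen_vandermonde_def)
  qed simp_all
  finally show ?thesis .
qed

lemma det_M4_char2:
  fixes u :: "nat \<Rightarrow> 'a::field"
  assumes char2: "(2::'a) = 0" and nonzero: "\<forall>j<4. u j \<noteq> 0"
  shows "det (M4 u) = (\<Prod>j<4. inverse (u j) ^ 5) * (\<Prod>j<4. \<Prod>i<j. u j ^ 2 - u i ^ 2) *
    (esym 4 2 u ^ 2 + esym 4 1 u * esym 4 3 u) ^ 2"
proof -
  have "gen_vandermonde [0, 1, 4, 5] (\<lambda>j. u j ^ 2) \<in> carrier_mat 4 4"
    by (simp add: gen_vandermonde_def numeral_eq_Suc)
  then have "det (M4 u) = (\<Prod>j<4. inverse (u j) ^ 5) * det (gen_vandermonde [0, 1, 4, 5] (\<lambda>j. u j ^ 2))"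
    unfolding M4_eq_scale_cols_gen_vandermonde[OF nonzero] by (rule det_mat_scale_cols)
  also have "det (gen_vandermonde [0, 1, 4, 5] (\<lambda>j. u j ^ 2)) = (\<Prod>j<4. \<Prod>i<j. u j ^ 2 - u i ^ 2) *
      ((esym 4 2 u ^ 2) ^ 2 - esym 4 1 u ^ 2 * esym 4 3 u ^ 2)"
    by (simp only: det_gen_vandermonde_0145 esym_power2_char2[OF char2])
  also have "(esym 4 2 u ^ 2) ^ 2 - esym 4 1 u ^ 2 * esym 4 3 u ^ 2 = (esym 4 2 u ^ 2 + esym 4 1 u * esym 4 3 u) ^ 2"
    by (simp add: diff_eq_add_char2[OF char2] power2_add_char2[OF char2] power_mult_distrib)
  finally show ?thesis
    by (simp only: mult.assoc)
qed

lemma rank_M4_ge_3_char2: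
  fixes u :: "nat \<Rightarrow> 'a::field"
  assumes char2: "(2::'a) = 0" and nonzero: "\<forall>j<4. u j \<noteq> 0" and inj: "inj_on u {0..<4}"
  shows "3 \<le> vec_space.rank 4 (M4 u)"
proof -
  have "inj_on (\<lambda>j. u j ^ 2) {0..<3}"
    using inj_on_power2_char2[OF char2 inj] by (rule inj_on_subset) auto
  then obtain r e :: nat where re: "(r, e) \<in> {(2, 4), (3, 5)}"
    and "det (gen_vandermonde [0, 1, e] (\<lambda>j. u j ^ 2)) \<noteq> 0"
    using det_gen_vandermonde_014_or_015_char2[OF char2] by fastforce
  moreover have "gen_vandermonde [0, 1, e] (\<lambda>j. u j ^ 2) \<in> carrier_mat 3 3"
    by (simp add: gen_vandermonde_def numeral_eq_Suc)
  then have "det (submatrix (M4 u) {0, 1, r} {0, 1, 2}) =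
      (\<Prod>j<3. inverse (u j) ^ 5) * det (gen_vandermonde [0, 1, e] (\<lambda>j. u j ^ 2))"
    unfolding M4_minor_eq_scale_cols_gen_vandermonde[OF nonzero re] by (rule det_mat_scale_cols)
  ultimately have "det (submatrix (M4 u) {0, 1, r} {0, 1, 2}) \<noteq> 0"
    using nonzero by simp
  then have "card {j. j < 4 \<and> j \<in> {0, 1, 2::nat}} \<le> vec_space.rank 4 (M4 u)"
    by (intro vec_space.rank_gt_minor) (simp add: M4_def)
  moreover have "{j. j < 4 \<and> j \<in> {0, 1, 2::nat}} = {0, 1, 2}"
    by auto
  ultimately show ?thesis
    by simp
qed

theorem lemma17:
  fixes u :: "nat \<Rightarrow> 'a::{field, finite}" and m q :: nat
  assumes "even m" and "m > 0" and "q = 2 ^ m"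
    and "card (UNIV :: 'a set) = q ^ 2"
    and "inj_on u {0..<4}"
    and "\<forall>j<4. u j \<in> roots_unity (q + 1)"
  shows "vec_space.rank 4 (M4 u) = 3 \<longleftrightarrow>
         (esym 4 2 u) ^ 2 + esym 4 1 u * esym 4 3 u = 0"
proof -
  interpret vec_space "TYPE('a)" 4 .
  have char2: "(2::'a) = 0"
    using assms(3,4) by (intro two_eq_zero_if_card_power_two[of "m * 2"]) (simp add: power_mult)
  have nonzero: "\<forall>j<4. u j \<noteq> 0"
    using assms(6) by (auto simp: roots_unity_def)
  have carrier: "M4 u \<in> carrier_mat 4 4"
    by (simp add: M4_def)
  have "det (M4 u) \<noteq> 0 \<longleftrightarrow> esym 4 2 u ^ 2 + esym 4 1 u * esym 4 3 u \<noteq> 0"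
    using det_M4_char2[OF char2 nonzero] nonzero
      vandermonde_prod_ne_zero[OF inj_on_power2_char2[OF char2 assms(5)]] by simp
  then have "rank (M4 u) = 4 \<longleftrightarrow> esym 4 2 u ^ 2 + esym 4 1 u * esym 4 3 u \<noteq> 0"
    using det_rank_iff[OF carrier] by simp
  moreover have "3 \<le> rank (M4 u)" "rank (M4 u) \<le> 4"
    using rank_M4_ge_3_char2[OF char2 nonzero assms(5)] rank_le_nc[OF carrier] by simp_all
  ultimately show ?thesis
    by linarith
qed

end
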